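(* Let $\Gamma$ be a finite multiset of freshness and equality formulas well-formed in a context $\Sigma$. If $\Sigma;\Gamma\Rightarrow\bot$ is derivable in the sequent calculus $NL^{\Rightarrow}$, then $\Gamma$ is unsatisfiable, i.e. there is no interpretation $\theta$ with $\theta:\Sigma$ and $\theta\models A$ for every $A\in\Gamma$.
   Context: Sequent calculus $NL^{\Rightarrow}$. Types $\tau ::= \delta \mid \nu \mid \langle\nu\rangle\tau$ ($\delta$ data types, $\nu$ name types). Terms $t ::= x \mid \mathsf{a} \mid c \mid f(\vec t)$ over variables $x$ and a disjoint countably infinite set of name-symbols $\mathsf a$; the signature contains, for all $\nu,\tau$, swapping $(a\;b)\cdot t$, abstraction $\langle a\rangle t$ (type $\langle\nu\rangle\tau$), equality $t\approx u$, freshness $a\#t$, besides constants $c$, function symbols $f$ and relation symbols $p$. Formulas: $\top,\bot$, atoms, $\wedge,\vee,\supset,\forall x{:}\tau,\exists x{:}\tau$, and $\mathsf N\mathsf a{:}\nu.\phi$ (binding the name-symbol $\mathsf a$). Contexts $\Sigma::=\cdot\mid\Sigma,x{:}\tau\mid\Sigma\#\mathsf a{:}\nu$ (no symbol twice; $\Sigma\#\mathsf a{:}\nu$ means $\mathsf a$ is fresh for everything in $\Sigma$); $Tm_\Sigma$ = terms well-typed in $\Sigma$; $|\cdot|=\emptyset$, $|\Sigma,x{:}\tau|=|\Sigma|$, $|\Sigma\#\mathsf a{:}\nu|=|\Sigma|\cup\{\mathsf a\#t\mid t\in Tm_\Sigma\}$. Rules for $\Sigma;\Gamma\Rightarrow\Delta$: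 (i) classical G3c rules (atomic initial sequents, $\top R$, $\bot L$, context-sharing left/right rules for $\wedge,\vee,\supset,\forall,\exists$, eigenvariables added to $\Sigma$); (ii) $\mathsf N R$: from $\Sigma\#\mathsf a{:}\nu;\Gamma\Rightarrow\phi,\Delta$ infer $\Sigma;\Gamma\Rightarrow\mathsf N\mathsf a{:}\nu.\phi,\Delta$; $\mathsf N L$: from $\Sigma\#\mathsf a{:}\nu;\Gamma,\phi\Rightarrow\Delta$ infer $\Sigma;\Gamma,\mathsf N\mathsf a{:}\nu.\phi\Rightarrow\Delta$ ($\mathsf a\notin\Sigma$); (iii) $\approx R$: from $\Sigma;\Gamma,t\approx t\Rightarrow\Delta$ infer $\Sigma;\Gamma\Rightarrow\Delta$; $\approx S$: from $\Sigma;\Gamma,t\approx u,P(t),P(u)\Rightarrow\Delta$ infer $\Sigma;\Gamma,t\approx u,P(t)\Rightarrow\Delta$ ($P$ atomic); for each instance $\bigwedge_j P_j\supset\bigvee_{i\le m}Q_i$ ($m\ge0$) of (S1) $(a\;a)\cdot x\approx x$, (S2) $(a\;b)\cdot(a\;b)\cdot x\approx x$, (S3) $(a\;b)\cdot a\approx b$, (E1) $(a\;b)\cdot c\approx c$, (E2) $(a\;b)\cdot f(\vec t)\approx f((a\;b)\cdot\vec t)$, (E3) $p(\vec t)\supset p((a\;b)\cdot\vec t)$, (F1) $a\#x\wedge b\#x\supset(a\;b)\cdot x\approx x$, (F2) $a\#b$ ($a,b$ of distinct name types), (F3) $a\#a\supset\bot$, (F4) $a\#b\vee a\approx b$, (A1)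 $a\#y\wedge x\approx(a\;b)\cdot y\supset\langle a\rangle x\approx\langle b\rangle y$ (arbitrary well-typed terms), the rule: from $\Sigma;\Gamma,\vec P,Q_i\Rightarrow\Delta$ for all $i$ infer $\Sigma;\Gamma,\vec P\Rightarrow\Delta$; (A2) from $\Sigma;\Gamma,E,a\approx b,t\approx u\Rightarrow\Delta$ and $\Sigma;\Gamma,E,a\#u,t\approx(a\;b)\cdot u\Rightarrow\Delta$ infer $\Sigma;\Gamma,E\Rightarrow\Delta$, $E$ being $\langle a\rangle t\approx\langle b\rangle u$; (A3) from $\Sigma\vdash t:\langle\nu\rangle\sigma$ and $\Sigma,a{:}\nu,x{:}\sigma;\Gamma,t\approx\langle a\rangle x\Rightarrow\Delta$ ($a,x\notin\Sigma$) infer $\Sigma;\Gamma\Rightarrow\Delta$; (F) from $\Sigma\#\mathsf a{:}\nu;\Gamma\Rightarrow\Delta$ ($\mathsf a\notin\Sigma$) infer $\Sigma;\Gamma\Rightarrow\Delta$; ($\Sigma\#$) from $\Sigma;\Gamma,\mathsf a\#t\Rightarrow\Delta$ with $\mathsf a\#t\in|\Sigma|$ infer $\Sigma;\Gamma\Rightarrow\Delta$. Herbrand model. $Tm$: ground swapping-free terms $t::=\mathsf a\mid c\mid f(\vec t)\mid\langle\mathsf a\rangle t$. Syntactic swapping: $(\mathsf a\;\mathsf b)\cdot\mathsf a=\mathsf b$, $(\mathsf a\;\mathsf b)\cdot\mathsf b=\mathsf a$, $(\mathsf a\;\mathsf b)\cdot\mathsf c=\mathsf c$ ($\mathsf c\ne\mathsf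 a,\mathsf b$), $(\mathsf a\;\mathsf b)\cdot c=c$, $(\mathsf a\;\mathsf b)\cdot f(\vec t)=f((\mathsf a\;\mathsf b)\cdot\vec t)$, $(\mathsf a\;\mathsf b)\cdot\langle\mathsf c\rangle t=\langle(\mathsf a\;\mathsf b)\cdot\mathsf c\rangle((\mathsf a\;\mathsf b)\cdot t)$. Freshness (inductive): $\mathsf a\#\mathsf b$ if $\mathsf a\ne\mathsf b$; $\mathsf a\#c$; $\mathsf a\#f(\vec t)$ if $\mathsf a\#t_i$ for all $i$; $\mathsf a\#\langle\mathsf a\rangle t$; $\mathsf a\#\langle\mathsf b\rangle t$ if $\mathsf a\ne\mathsf b$ and $\mathsf a\#t$. Equality (inductive): $\mathsf a\approx\mathsf a$; $c\approx c$; $f(\vec t)\approx f(\vec u)$ if $t_i\approx u_i$ for all $i$; $\langle\mathsf a\rangle t\approx\langle\mathsf a\rangle u$ if $t\approx u$; $\langle\mathsf a\rangle t\approx\langle\mathsf b\rangle u$ if $\mathsf a\ne\mathsf b$, $\mathsf a\#u$ and $t\approx(\mathsf a\;\mathsf b)\cdot u$. This $\approx$ is an equivalence relation and $\approx,\#$ are preserved by swapping; $NTm=Tm/{\approx}$. An interpretation $\theta$ maps variables to elements of $NTm$ and extends to terms by $\theta(\mathsf a)=\mathsf a$, $\theta(c)=c$, $\theta(f(\vec t))=f(\theta(t_1),\dots,\theta(t_n))$, $\theta((a\;b)\cdot t)=(\theta(a)\;\theta(b))\cdot\theta(t)$, $\theta(\langle a\rangle t)=\langle\theta(a)\rangle\theta(t)$.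 $\theta\models t\approx u$ iff $\theta(t)\approx\theta(u)$; $\theta\models a\#t$ iff $\theta(a)\#\theta(t)$. $\theta:\Sigma$ means $\theta(x)$ has the type $\Sigma$ assigns to $x$ for each variable $x$ of $\Sigma$, and $\mathsf a\#\theta(x)$ for each $\mathsf a\#x\in|\Sigma|$. *)

theory Defs
  imports Main "HOL-Library.Multiset"
begin

section \<open>Syntax of nominal logic (locally nameless representation)\<close>

datatype ('d, 'n) ty = Data 'd | NameT 'n | AbsT 'n "('d, 'n) ty"

text \<open>Name-symbols are sorted: a name-symbol of name type nu is a pair (nu, k).
  There are countably infinitely many name-symbols of each name type.\<close>
type_synonym 'n nsym = "'n \<times> nat"

text \<open>Var x are (free) variables, Nm a are (free) name-symbols,
  Bnd i is a locally-nameless bound occurrence (bound by the i-th enclosing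
  quantifier / N-binder of a formula; never occurs in well-typed terms).
  Swap a b t is (a b).t and Ab a t is the abstraction <a>t.\<close>
datatype ('c, 'f, 'n) trm =
    Var nat | Bnd nat | Nm "'n nsym" | Con 'c | Fn 'f "('c, 'f, 'n) trm list"
  | Swap "('c, 'f, 'n) trm" "('c, 'f, 'n) trm" "('c, 'f, 'n) trm"
  | Ab "('c, 'f, 'n) trm" "('c, 'f, 'n) trm"

text \<open>Formulas. Eq t u is t = u (nominal equality), Fr a t is a # t;
  All, Ex bind a variable of the given type, New bind a name-symbol.\<close>
datatype ('c, 'f, 'p, 'd, 'n) fm =
    Top | Bot
  | Rel 'p "('c, 'f, 'n) trm list"
  | Eq "('c, 'f, 'n) trm" "('c, 'f, 'n) trm"
  | Fr "('c, 'f, 'n) trm" "('c, 'f, 'n) trm"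
  | And "('c, 'f, 'p, 'd, 'n) fm" "('c, 'f, 'p, 'd, 'n) fm"
  | Or "('c, 'f, 'p, 'd, 'n) fm" "('c, 'f, 'p, 'd, 'n) fm"
  | Imp "('c, 'f, 'p, 'd, 'n) fm" "('c, 'f, 'p, 'd, 'n) fm"
  | All "('d, 'n) ty" "('c, 'f, 'p, 'd, 'n) fm"
  | Ex "('d, 'n) ty" "('c, 'f, 'p, 'd, 'n) fm"
  | New 'n "('c, 'f, 'p, 'd, 'n) fm"

fun is_atom :: "('c, 'f, 'p, 'd, 'n) fm \<Rightarrow> bool" where
  "is_atom (Rel p ts) = True"
| "is_atom (Eq t u) = True"
| "is_atom (Fr a t) = True"
| "is_atom _ = False"

fun is_eqfr :: "('c, 'f, 'p, 'd, 'n) fm \<Rightarrow> bool" where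
  "is_eqfr (Eq t u) = True"
| "is_eqfr (Fr a t) = True"
| "is_eqfr _ = False"

primrec topen :: "nat \<Rightarrow> ('c, 'f, 'n) trm \<Rightarrow> ('c, 'f, 'n) trm \<Rightarrow> ('c, 'f, 'n) trm" where
  "topen k s (Var x) = Var x"
| "topen k s (Bnd i) = (if i = k then s else Bnd i)"
| "topen k s (Nm a) = Nm a"
| "topen k s (Con c) = Con c"
| "topen k s (Fn f ts) = Fn f (map (topen k s) ts)"
| "topen k s (Swap a b t) = Swap (topen k s a) (topen k s b) (topen k s t)"
| "topen k s (Ab a t) = Ab (topen k s a) (topen k s t)"

primrec fopen :: "nat \<Rightarrow> ('c, 'f, 'n) trm \<Rightarrow> ('c, 'f, 'p, 'd, 'n) fm \<Rightarrow> ('c, 'f, 'p, 'd, 'n) fm" where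
  "fopen k s Top = Top"
| "fopen k s Bot = Bot"
| "fopen k s (Rel p ts) = Rel p (map (topen k s) ts)"
| "fopen k s (Eq t u) = Eq (topen k s t) (topen k s u)"
| "fopen k s (Fr a t) = Fr (topen k s a) (topen k s t)"
| "fopen k s (And A B) = And (fopen k s A) (fopen k s B)"
| "fopen k s (Or A B) = Or (fopen k s A) (fopen k s B)"
| "fopen k s (Imp A B) = Imp (fopen k s A) (fopen k s B)"
| "fopen k s (All \<tau> A) = All \<tau> (fopen (Suc k) s A)"
| "fopen k s (Ex \<tau> A) = Ex \<tau> (fopen (Suc k) s A)"
| "fopen k s (New \<nu> A) = New \<nu> (fopen (Suc k) s A)"

text \<open>inst A t = A[t/bound variable 0]; also used for P(t) with P an atom
  whose hole is Bnd 0.\<close>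
abbreviation inst :: "('c, 'f, 'p, 'd, 'n) fm \<Rightarrow> ('c, 'f, 'n) trm \<Rightarrow> ('c, 'f, 'p, 'd, 'n) fm" where
  "inst A t \<equiv> fopen 0 t A"

datatype ('c, 'f, 'p, 'd, 'n) sig =
  Sig (cty: "'c \<Rightarrow> 'd") (fty: "'f \<Rightarrow> ('d, 'n) ty list \<times> 'd") (pty: "'p \<Rightarrow> ('d, 'n) ty list")

text \<open>Context entries: x:tau, or #a:nu (the sort nu of a is part of a).
  Contexts are lists, extended at the right end.\<close>
datatype ('d, 'n) centry = CVar nat "('d, 'n) ty" | CNm "'n nsym"

type_synonym ('d, 'n) ctx = "('d, 'n) centry list"

primrec csym :: "('d, 'n) centry \<Rightarrow> nat + 'n nsym" where
  "csym (CVar x \<tau>) = Inl x"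
| "csym (CNm a) = Inr a"

definition ctx_ok :: "('d, 'n) ctx \<Rightarrow> bool" where
  "ctx_ok G \<longleftrightarrow> distinct (map csym G)"

definition var_in :: "nat \<Rightarrow> ('d, 'n) ctx \<Rightarrow> bool" where
  "var_in x G \<longleftrightarrow> Inl x \<in> csym ` set G"

definition nm_in :: "'n nsym \<Rightarrow> ('d, 'n) ctx \<Rightarrow> bool" where
  "nm_in a G \<longleftrightarrow> Inr a \<in> csym ` set G"

inductive has_ty :: "('c, 'f, 'p, 'd, 'n) sig \<Rightarrow> ('d, 'n) ctx \<Rightarrow> ('c, 'f, 'n) trm \<Rightarrow> ('d, 'n) ty \<Rightarrow> bool"
  for S :: "('c, 'f, 'p, 'd, 'n) sig" where
  ty_var: "CVar x \<tau> \<in> set G \<Longrightarrow> has_ty S G (Var x) \<tau>"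
| ty_nm: "CNm a \<in> set G \<Longrightarrow> has_ty S G (Nm a) (NameT (fst a))"
| ty_con: "has_ty S G (Con c) (Data (cty S c))"
| ty_fn: "list_all2 (has_ty S G) ts (fst (fty S f)) \<Longrightarrow> has_ty S G (Fn f ts) (Data (snd (fty S f)))"
| ty_swap: "has_ty S G a (NameT \<nu>) \<Longrightarrow> has_ty S G b (NameT \<nu>) \<Longrightarrow> has_ty S G t \<tau>
            \<Longrightarrow> has_ty S G (Swap a b t) \<tau>"
| ty_abs: "has_ty S G a (NameT \<nu>) \<Longrightarrow> has_ty S G t \<tau> \<Longrightarrow> has_ty S G (Ab a t) (AbsT \<nu> \<tau>)"

fun wf_atom :: "('c, 'f, 'p, 'd, 'n) sig \<Rightarrow> ('d, 'n) ctx \<Rightarrow> ('c, 'f, 'p, 'd, 'n) fm \<Rightarrow> bool" where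
  "wf_atom S G (Rel p ts) = list_all2 (has_ty S G) ts (pty S p)"
| "wf_atom S G (Eq t u) = (\<exists>\<tau>. has_ty S G t \<tau> \<and> has_ty S G u \<tau>)"
| "wf_atom S G (Fr a t) = (\<exists>\<nu> \<tau>. has_ty S G a (NameT \<nu>) \<and> has_ty S G t \<tau>)"
| "wf_atom S G _ = False"

text \<open>The set |Sigma| of freshness constraints, as pairs (a, t) standing for a # t:
  |Sigma # a:nu| = |Sigma| \<union> {a # t | t \<in> Tm_Sigma}, and variables add nothing.\<close>
inductive_set ctx_fresh :: "('c, 'f, 'p, 'd, 'n) sig \<Rightarrow> ('d, 'n) ctx \<Rightarrow> ('n nsym \<times> ('c, 'f, 'n) trm) set"
  for S :: "('c, 'f, 'p, 'd, 'n) sig" and G :: "('d, 'n) ctx" where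
  "G = G1 @ [CNm a] @ G2 \<Longrightarrow> has_ty S G1 t \<tau> \<Longrightarrow> (a, t) \<in> ctx_fresh S G"

section \<open>Axiom instances (hypotheses P_j and disjuncts Q_i)\<close>

inductive ax_inst :: "('c, 'f, 'p, 'd, 'n) sig \<Rightarrow> ('d, 'n) ctx
   \<Rightarrow> ('c, 'f, 'p, 'd, 'n) fm list \<Rightarrow> ('c, 'f, 'p, 'd, 'n) fm list \<Rightarrow> bool"
  for S :: "('c, 'f, 'p, 'd, 'n) sig" and G :: "('d, 'n) ctx" where
  S1: "has_ty S G a (NameT \<nu>) \<Longrightarrow> has_ty S G t \<tau> \<Longrightarrow> ax_inst S G [] [Eq (Swap a a t) t]"
| S2: "has_ty S G a (NameT \<nu>) \<Longrightarrow> has_ty S G b (NameT \<nu>) \<Longrightarrow> has_ty S G t \<tau>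
       \<Longrightarrow> ax_inst S G [] [Eq (Swap a b (Swap a b t)) t]"
| S3: "has_ty S G a (NameT \<nu>) \<Longrightarrow> has_ty S G b (NameT \<nu>) \<Longrightarrow> ax_inst S G [] [Eq (Swap a b a) b]"
| E1: "has_ty S G a (NameT \<nu>) \<Longrightarrow> has_ty S G b (NameT \<nu>) \<Longrightarrow> ax_inst S G [] [Eq (Swap a b (Con c)) (Con c)]"
| E2_fn: "has_ty S G a (NameT \<nu>) \<Longrightarrow> has_ty S G b (NameT \<nu>) \<Longrightarrow> has_ty S G (Fn f ts) \<tau>
       \<Longrightarrow> ax_inst S G [] [Eq (Swap a b (Fn f ts)) (Fn f (map (Swap a b) ts))]"
| E2_swap: "has_ty S G a (NameT \<nu>) \<Longrightarrow> has_ty S G b (NameT \<nu>) \<Longrightarrow> has_ty S G (Swap c d t) \<tau>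
       \<Longrightarrow> ax_inst S G [] [Eq (Swap a b (Swap c d t)) (Swap (Swap a b c) (Swap a b d) (Swap a b t))]"
| E2_abs: "has_ty S G a (NameT \<nu>) \<Longrightarrow> has_ty S G b (NameT \<nu>) \<Longrightarrow> has_ty S G (Ab c t) \<tau>
       \<Longrightarrow> ax_inst S G [] [Eq (Swap a b (Ab c t)) (Ab (Swap a b c) (Swap a b t))]"
| E3_rel: "has_ty S G a (NameT \<nu>) \<Longrightarrow> has_ty S G b (NameT \<nu>) \<Longrightarrow> wf_atom S G (Rel p ts)
       \<Longrightarrow> ax_inst S G [Rel p ts] [Rel p (map (Swap a b) ts)]"
| E3_eq: "has_ty S G a (NameT \<nu>) \<Longrightarrow> has_ty S G b (NameT \<nu>) \<Longrightarrow> wf_atom S G (Eq t u)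
       \<Longrightarrow> ax_inst S G [Eq t u] [Eq (Swap a b t) (Swap a b u)]"
| E3_fr: "has_ty S G a (NameT \<nu>) \<Longrightarrow> has_ty S G b (NameT \<nu>) \<Longrightarrow> wf_atom S G (Fr c t)
       \<Longrightarrow> ax_inst S G [Fr c t] [Fr (Swap a b c) (Swap a b t)]"
| F1: "has_ty S G a (NameT \<nu>) \<Longrightarrow> has_ty S G b (NameT \<nu>) \<Longrightarrow> has_ty S G t \<tau>
       \<Longrightarrow> ax_inst S G [Fr a t, Fr b t] [Eq (Swap a b t) t]"
| F2: "has_ty S G a (NameT \<nu>) \<Longrightarrow> has_ty S G b (NameT \<nu>') \<Longrightarrow> \<nu> \<noteq> \<nu>'
       \<Longrightarrow> ax_inst S G [] [Fr a b]"
| F3: "has_ty S G a (NameT \<nu>) \<Longrightarrow> ax_inst S G [Fr a a] []"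
| F4: "has_ty S G a (NameT \<nu>) \<Longrightarrow> has_ty S G b (NameT \<nu>) \<Longrightarrow> ax_inst S G [] [Fr a b, Eq a b]"
| A1: "has_ty S G a (NameT \<nu>) \<Longrightarrow> has_ty S G b (NameT \<nu>) \<Longrightarrow> has_ty S G t \<tau> \<Longrightarrow> has_ty S G u \<tau>
       \<Longrightarrow> ax_inst S G [Fr a u, Eq t (Swap a b u)] [Eq (Ab a t) (Ab b u)]"

section \<open>The sequent calculus NL=>\<close>

inductive deriv :: "('c, 'f, 'p, 'd, 'n) sig \<Rightarrow> ('d, 'n) ctx
   \<Rightarrow> ('c, 'f, 'p, 'd, 'n) fm multiset \<Rightarrow> ('c, 'f, 'p, 'd, 'n) fm multiset \<Rightarrow> bool"
  for S :: "('c, 'f, 'p, 'd, 'n) sig" where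
  init: "is_atom P \<Longrightarrow> deriv S G (add_mset P \<Gamma>) (add_mset P \<Delta>)"
| topR: "deriv S G \<Gamma> (add_mset Top \<Delta>)"
| botL: "deriv S G (add_mset Bot \<Gamma>) \<Delta>"
| andL: "deriv S G (add_mset A (add_mset B \<Gamma>)) \<Delta> \<Longrightarrow> deriv S G (add_mset (And A B) \<Gamma>) \<Delta>"
| andR: "deriv S G \<Gamma> (add_mset A \<Delta>) \<Longrightarrow> deriv S G \<Gamma> (add_mset B \<Delta>)
         \<Longrightarrow> deriv S G \<Gamma> (add_mset (And A B) \<Delta>)"
| orL: "deriv S G (add_mset A \<Gamma>) \<Delta> \<Longrightarrow> deriv S G (add_mset B \<Gamma>) \<Delta>
         \<Longrightarrow> deriv S G (add_mset (Or A B) \<Gamma>) \<Delta>"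
| orR: "deriv S G \<Gamma> (add_mset A (add_mset B \<Delta>)) \<Longrightarrow> deriv S G \<Gamma> (add_mset (Or A B) \<Delta>)"
| impL: "deriv S G \<Gamma> (add_mset A \<Delta>) \<Longrightarrow> deriv S G (add_mset B \<Gamma>) \<Delta>
         \<Longrightarrow> deriv S G (add_mset (Imp A B) \<Gamma>) \<Delta>"
| impR: "deriv S G (add_mset A \<Gamma>) (add_mset B \<Delta>) \<Longrightarrow> deriv S G \<Gamma> (add_mset (Imp A B) \<Delta>)"
| allL: "has_ty S G t \<tau> \<Longrightarrow> deriv S G (add_mset (inst A t) (add_mset (All \<tau> A) \<Gamma>)) \<Delta>
         \<Longrightarrow> deriv S G (add_mset (All \<tau> A) \<Gamma>) \<Delta>"
| allR: "\<not> var_in y G \<Longrightarrow> deriv S (G @ [CVar y \<tau>]) \<Gamma> (add_mset (inst A (Var y)) \<Delta>)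
         \<Longrightarrow> deriv S G \<Gamma> (add_mset (All \<tau> A) \<Delta>)"
| exL: "\<not> var_in y G \<Longrightarrow> deriv S (G @ [CVar y \<tau>]) (add_mset (inst A (Var y)) \<Gamma>) \<Delta>
         \<Longrightarrow> deriv S G (add_mset (Ex \<tau> A) \<Gamma>) \<Delta>"
| exR: "has_ty S G t \<tau> \<Longrightarrow> deriv S G \<Gamma> (add_mset (inst A t) (add_mset (Ex \<tau> A) \<Delta>))
         \<Longrightarrow> deriv S G \<Gamma> (add_mset (Ex \<tau> A) \<Delta>)"
| newR: "\<not> nm_in a G \<Longrightarrow> fst a = \<nu> \<Longrightarrow> deriv S (G @ [CNm a]) \<Gamma> (add_mset (inst A (Nm a)) \<Delta>)
         \<Longrightarrow> deriv S G \<Gamma> (add_mset (New \<nu> A) \<Delta>)"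
| newL: "\<not> nm_in a G \<Longrightarrow> fst a = \<nu> \<Longrightarrow> deriv S (G @ [CNm a]) (add_mset (inst A (Nm a)) \<Gamma>) \<Delta>
         \<Longrightarrow> deriv S G (add_mset (New \<nu> A) \<Gamma>) \<Delta>"
| eqR: "has_ty S G t \<tau> \<Longrightarrow> deriv S G (add_mset (Eq t t) \<Gamma>) \<Delta> \<Longrightarrow> deriv S G \<Gamma> \<Delta>"
| eqS: "is_atom P \<Longrightarrow> deriv S G (\<Gamma> + {#Eq t u, inst P t, inst P u#}) \<Delta>
         \<Longrightarrow> deriv S G (\<Gamma> + {#Eq t u, inst P t#}) \<Delta>"
| ax: "ax_inst S G Ps Qs \<Longrightarrow> (\<forall>Q \<in> set Qs. deriv S G (add_mset Q (\<Gamma> + mset Ps)) \<Delta>)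
         \<Longrightarrow> deriv S G (\<Gamma> + mset Ps) \<Delta>"
| A2: "deriv S G (\<Gamma> + {#Eq (Ab a t) (Ab b u), Eq a b, Eq t u#}) \<Delta>
       \<Longrightarrow> deriv S G (\<Gamma> + {#Eq (Ab a t) (Ab b u), Fr a u, Eq t (Swap a b u)#}) \<Delta>
       \<Longrightarrow> deriv S G (add_mset (Eq (Ab a t) (Ab b u)) \<Gamma>) \<Delta>"
| A3: "has_ty S G t (AbsT \<nu> \<sigma>) \<Longrightarrow> \<not> var_in a G \<Longrightarrow> \<not> var_in x G \<Longrightarrow> a \<noteq> x
       \<Longrightarrow> deriv S (G @ [CVar a (NameT \<nu>), CVar x \<sigma>]) (add_mset (Eq t (Ab (Var a) (Var x))) \<Gamma>) \<Delta>
       \<Longrightarrow> deriv S G \<Gamma> \<Delta>"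
| Fresh: "\<not> nm_in a G \<Longrightarrow> deriv S (G @ [CNm a]) \<Gamma> \<Delta> \<Longrightarrow> deriv S G \<Gamma> \<Delta>"
| CtxFr: "(a, t) \<in> ctx_fresh S G \<Longrightarrow> deriv S G (add_mset (Fr (Nm a) t) \<Gamma>) \<Delta> \<Longrightarrow> deriv S G \<Gamma> \<Delta>"

section \<open>The Herbrand model\<close>

datatype ('c, 'f, 'n) gtm = GNm "'n nsym" | GCon 'c | GFn 'f "('c, 'f, 'n) gtm list"
  | GAb "'n nsym" "('c, 'f, 'n) gtm"

inductive gty :: "('c, 'f, 'p, 'd, 'n) sig \<Rightarrow> ('c, 'f, 'n) gtm \<Rightarrow> ('d, 'n) ty \<Rightarrow> bool"
  for S :: "('c, 'f, 'p, 'd, 'n) sig" where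
  "gty S (GNm a) (NameT (fst a))"
| "gty S (GCon c) (Data (cty S c))"
| "list_all2 (gty S) gs (fst (fty S f)) \<Longrightarrow> gty S (GFn f gs) (Data (snd (fty S f)))"
| "gty S g \<tau> \<Longrightarrow> gty S (GAb a g) (AbsT (fst a) \<tau>)"

definition nswap :: "'n nsym \<Rightarrow> 'n nsym \<Rightarrow> 'n nsym \<Rightarrow> 'n nsym" where
  "nswap a b c = (if c = a then b else if c = b then a else c)"

primrec gswap :: "'n nsym \<Rightarrow> 'n nsym \<Rightarrow> ('c, 'f, 'n) gtm \<Rightarrow> ('c, 'f, 'n) gtm" where
  "gswap a b (GNm c) = GNm (nswap a b c)"
| "gswap a b (GCon c) = GCon c"
| "gswap a b (GFn f ts) = GFn f (map (gswap a b) ts)"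
| "gswap a b (GAb c t) = GAb (nswap a b c) (gswap a b t)"

inductive gfresh :: "'n nsym \<Rightarrow> ('c, 'f, 'n) gtm \<Rightarrow> bool" where
  "a \<noteq> b \<Longrightarrow> gfresh a (GNm b)"
| "gfresh a (GCon c)"
| "(\<forall>t \<in> set ts. gfresh a t) \<Longrightarrow> gfresh a (GFn f ts)"
| "gfresh a (GAb a t)"
| "a \<noteq> b \<Longrightarrow> gfresh a t \<Longrightarrow> gfresh a (GAb b t)"

inductive geq :: "('c, 'f, 'n) gtm \<Rightarrow> ('c, 'f, 'n) gtm \<Rightarrow> bool" where
  "geq (GNm a) (GNm a)"
| "geq (GCon c) (GCon c)"
| "list_all2 geq ts us \<Longrightarrow> geq (GFn f ts) (GFn f us)"
| "geq t u \<Longrightarrow> geq (GAb a t) (GAb a u)"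
| "a \<noteq> b \<Longrightarrow> gfresh a u \<Longrightarrow> geq t (gswap a b u) \<Longrightarrow> geq (GAb a t) (GAb b u)"

text \<open>An interpretation maps variables to (representatives of) elements of
  NTm = Tm / geq; everything below respects geq.\<close>
type_synonym ('c, 'f, 'n) interp = "nat \<Rightarrow> ('c, 'f, 'n) gtm"

primrec ev :: "('c, 'f, 'n) interp \<Rightarrow> ('c, 'f, 'n) trm \<Rightarrow> ('c, 'f, 'n) gtm" where
  "ev \<theta> (Var x) = \<theta> x"
| "ev \<theta> (Bnd i) = undefined"
| "ev \<theta> (Nm a) = GNm a"
| "ev \<theta> (Con c) = GCon c"
| "ev \<theta> (Fn f ts) = GFn f (map (ev \<theta>) ts)"
| "ev \<theta> (Swap a b t) = (case (ev \<theta> a, ev \<theta> b) of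
       (GNm a', GNm b') \<Rightarrow> gswap a' b' (ev \<theta> t) | _ \<Rightarrow> ev \<theta> t)"
| "ev \<theta> (Ab a t) = (case ev \<theta> a of GNm a' \<Rightarrow> GAb a' (ev \<theta> t) | _ \<Rightarrow> ev \<theta> t)"

fun sat_eqfr :: "('c, 'f, 'n) interp \<Rightarrow> ('c, 'f, 'p, 'd, 'n) fm \<Rightarrow> bool" where
  "sat_eqfr \<theta> (Eq t u) = geq (ev \<theta> t) (ev \<theta> u)"
| "sat_eqfr \<theta> (Fr a t) = (case ev \<theta> a of GNm a' \<Rightarrow> gfresh a' (ev \<theta> t) | _ \<Rightarrow> False)"
| "sat_eqfr \<theta> _ = False"

definition interp_ok :: "('c, 'f, 'p, 'd, 'n) sig \<Rightarrow> ('d, 'n) ctx \<Rightarrow> ('c, 'f, 'n) interp \<Rightarrow> bool" where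
  "interp_ok S G \<theta> \<longleftrightarrow>
     (\<forall>x \<tau>. CVar x \<tau> \<in> set G \<longrightarrow> gty S (\<theta> x) \<tau>) \<and>
     (\<forall>a x. (a, Var x) \<in> ctx_fresh S G \<longrightarrow> gfresh a (\<theta> x))"

end

theory Submission
  imports Defs
begin

text \<open>Every rule of \<open>NL\<^sup>\<Rightarrow>\<close> that can end a derivation of \<open>\<Sigma>;\<Gamma> \<Rightarrow> \<bottom>\<close> with only
  equality and freshness atoms in \<open>\<Gamma>\<close> has a premise of the same shape whose antecedent is
  satisfiable whenever \<open>\<Gamma>\<close> is; so by induction on derivations \<open>\<Gamma>\<close> cannot be satisfiable.
  In the Herbrand model this needs: alpha-equivalence is an equivalence relation respected
  by swapping and freshness (for \<open>(\<approx>S)\<close>, (A2) and the axioms); rule (F) is validated by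
  renaming the new name \<open>a\<close> to a name unused by the interpretation, which by equivariance
  preserves satisfaction; and rule (A3) by reading off the value of \<open>t\<close>, which has
  abstraction type, as an abstraction \<open>\<langle>n\<rangle>g\<close>.\<close>

section \<open>Swapping, freshness and alpha-equivalence of ground terms\<close>

lemma nswap_simps [simp]:
  "nswap a b a = b" "nswap a b b = a" "c \<noteq> a \<Longrightarrow> c \<noteq> b \<Longrightarrow> nswap a b c = c"
  by (auto simp: nswap_def)

lemma nswap_nswap [simp]: "nswap a b (nswap a b c) = c"
  by (auto simp: nswap_def)

lemma nswap_same [simp]: "nswap a a c = c"
  by (auto simp: nswap_def)

lemma nswap_commute: "nswap a b = nswap b a"
  by (auto simp: nswap_def fun_eq_iff)

lemma nswap_eq_iff [simp]: "nswap a b c = nswap a b d \<longleftrightarrow> c = d"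
  by (auto simp: nswap_def)

lemma fst_nswap: "fst a = fst b \<Longrightarrow> fst (nswap a b c) = fst c"
  by (auto simp: nswap_def)

lemma gswap_gswap [simp]: "gswap a b (gswap a b x) = x"
  by (induction x) (auto intro: map_idI)

lemma gswap_same [simp]: "gswap a a x = x"
  by (induction x) (auto intro: map_idI)

lemma gswap_commute: "gswap a b x = gswap b a x"
  by (induction x) (auto simp: nswap_commute[of a b])

lemma gswap_gswap_conj: "gswap p q (gswap a b x) = gswap (nswap p q a) (nswap p q b) (gswap p q x)"
  by (induction x) (auto simp: nswap_def)

lemma gfresh_GNm [simp]: "gfresh a (GNm b) \<longleftrightarrow> a \<noteq> b"
  and gfresh_GCon [simp]: "gfresh a (GCon c)"
  and gfresh_GFn [simp]: "gfresh a (GFn f ts) \<longleftrightarrow> (\<forall>t \<in> set ts. gfresh a t)"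
  and gfresh_GAb [simp]: "gfresh a (GAb b t) \<longleftrightarrow> a = b \<or> gfresh a t"
  by (auto elim: gfresh.cases intro: gfresh.intros)

lemma gfresh_gswap_iff [simp]: "gfresh (nswap p q a) (gswap p q x) \<longleftrightarrow> gfresh a x"
proof -
  have eqvt: "gfresh (nswap p q b) (gswap p q y)" if "gfresh b y" for b y
    using that by (induction y) auto
  show ?thesis
    using eqvt[of a x] eqvt[of "nswap p q a" "gswap p q x"] by auto
qed

primrec gnames :: "('c, 'f, 'n) gtm \<Rightarrow> 'n nsym set" where
  "gnames (GNm a) = {a}"
| "gnames (GCon c) = {}"
| "gnames (GFn f ts) = \<Union>(set (map gnames ts))"
| "gnames (GAb a t) = insert a (gnames t)"

lemma finite_gnames [simp]: "finite (gnames x)"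
  by (induction x) auto

lemma gfresh_if_notin_gnames: "a \<notin> gnames x \<Longrightarrow> gfresh a x"
  by (induction x) auto

lemma geq_refl [simp]: "geq x x"
  by (induction x) (auto intro!: geq.intros simp: list_all2_conv_all_nth)

lemma geq_GNm_iff [simp]: "geq (GNm a) y \<longleftrightarrow> y = GNm a" "geq x (GNm a) \<longleftrightarrow> x = GNm a"
  by (auto elim: geq.cases intro: geq.intros)

lemma geq_GCon_iff [simp]: "geq (GCon c) y \<longleftrightarrow> y = GCon c"
  by (auto elim: geq.cases intro: geq.intros)

lemma geq_GAbE:
  assumes "geq (GAb p x) (GAb q y)"
  obtains "p = q" "geq x y" | "p \<noteq> q" "gfresh p y" "geq x (gswap p q y)"
  using assms by (auto elim: geq.cases)

lemma geq_gswap: "geq x y \<Longrightarrow> geq (gswap p q x) (gswap p q y)"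
proof (induction rule: geq.induct)
  case (3 ts us f)
  then show ?case by (auto intro!: geq.intros simp: list_all2_map1 list_all2_map2 elim: list_all2_mono)
next
  case (5 a b u t)
  then show ?case by (auto intro!: geq.intros simp: gswap_gswap_conj[of p q a b u])
qed (auto intro: geq.intros)

lemma gfresh_geq: "geq x y \<Longrightarrow> gfresh c x \<Longrightarrow> gfresh c y"
proof (induction arbitrary: c rule: geq.induct)
  case (3 ts us f)
  then show ?case
    unfolding gfresh_GFn list_all2_conv_all_nth by (metis in_set_conv_nth)
next
  case (5 a b u t)
  show ?case
  proof (cases "c = a \<or> c = b")
    case False
    with "5.prems" have "gfresh c t" by simp
    then have "gfresh (nswap a b c) (gswap a b u)" using "5.IH" False by simp
    then show ?thesis by simp
  qed (use 5 in auto)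
qed auto

lemma geq_sym: "geq x y \<Longrightarrow> geq y x"
proof (induction rule: geq.induct)
  case (3 ts us f)
  then show ?case by (auto intro!: geq.intros simp: list_all2_conv_all_nth)
next
  case (5 a b u t)
  have "geq u (gswap a b t)"
    using geq_gswap[OF 5(4), of a b] by simp
  moreover have "gfresh b t"
    using gfresh_geq[OF 5(4)] gfresh_gswap_iff[of a b a u] 5(2) by simp
  ultimately show ?case
    using 5(1) by (auto intro!: geq.intros simp: gswap_commute[of a b])
qed (auto intro: geq.intros)

lemma geq_gswap_fresh: "gfresh a x \<Longrightarrow> gfresh b x \<Longrightarrow> geq (gswap a b x) x"
proof (induction x)
  case (GFn f ts)
  then show ?case by (auto intro!: geq.intros simp: list_all2_conv_all_nth)
next
  case (GAb c t)
  then show ?case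
    by (cases "a = b"; cases "c = a"; cases "c = b")
       (auto intro!: geq.intros simp: gswap_commute[of a b])
qed (auto intro: geq.intros)

lemma geq_GAb_trans:
  assumes IH: "\<And>y z. geq t y \<Longrightarrow> geq y z \<Longrightarrow> geq t z"
    and "geq (GAb a t) (GAb b u)" "geq (GAb b u) (GAb c v)"
  shows "geq (GAb a t) (GAb c v)"
  using assms(3)
proof (cases rule: geq_GAbE)
  case 1
  from assms(2) show ?thesis
  proof (cases rule: geq_GAbE)
    case 1
    then show ?thesis using IH \<open>geq u v\<close> \<open>b = c\<close> by (auto intro: geq.intros)
  next
    case 2
    have "geq t (gswap a b v)"
      using IH[OF \<open>geq t (gswap a b u)\<close> geq_gswap[OF \<open>geq u v\<close>]] .
    moreover have "gfresh a v" using gfresh_geq[OF \<open>geq u v\<close> \<open>gfresh a u\<close>] .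
    ultimately show ?thesis using \<open>a \<noteq> b\<close> \<open>b = c\<close> by (auto intro: geq.intros)
  qed
next
  case 2
  from assms(2) show ?thesis
  proof (cases rule: geq_GAbE)
    case 1
    then show ?thesis using IH 2 by (auto intro: geq.intros)
  next
    case ab: 2
    have tu: "geq t (gswap a b (gswap b c v))"
      using IH[OF \<open>geq t (gswap a b u)\<close> geq_gswap[OF \<open>geq u (gswap b c v)\<close>]] .
    show ?thesis
    proof (cases "a = c")
      case True
      then show ?thesis using tu by (simp add: gswap_commute[of b c] geq.intros(4))
    next
      case False
      \<comment> \<open>\<open>(a b)(b c) v = (a c)(a b) v\<close>, and \<open>(a b)\<close> fixes \<open>v\<close> up to alpha since \<open>a, b\<close> are fresh for \<open>v\<close>\<close>
      have "gfresh a v"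
        using gfresh_geq[OF \<open>geq u (gswap b c v)\<close> \<open>gfresh a u\<close>] gfresh_gswap_iff[of b c a v]
          False ab(1) by simp
      have "gswap a b (gswap b c v) = gswap a c (gswap a b v)"
        using False ab(1) 2(1) by (simp add: gswap_gswap_conj[of a b b c v])
      with tu have "geq t (gswap a c (gswap a b v))" by simp
      moreover have "geq (gswap a c (gswap a b v)) (gswap a c v)"
        using geq_gswap[OF geq_gswap_fresh[OF \<open>gfresh a v\<close> \<open>gfresh b v\<close>]] .
      ultimately have "geq t (gswap a c v)" using IH by blast
      then show ?thesis using False \<open>gfresh a v\<close> by (auto intro: geq.intros)
    qed
  qed
qed

lemma geq_trans: "geq x y \<Longrightarrow> geq y z \<Longrightarrow> geq x z"
proof (induction x arbitrary: y z)
  case (GFn f ts)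
  from GFn.prems(1) obtain us where "y = GFn f us" "list_all2 geq ts us"
    by (auto elim: geq.cases)
  moreover from GFn.prems(2) this(1) obtain vs where "z = GFn f vs" "list_all2 geq us vs"
    by (auto elim: geq.cases)
  moreover have "list_all2 geq ts vs"
    using \<open>list_all2 geq ts us\<close> \<open>list_all2 geq us vs\<close> GFn.IH
    unfolding list_all2_conv_all_nth by (metis nth_mem)
  ultimately show ?case by (auto intro: geq.intros)
next
  case (GAb a t)
  from GAb.prems(1) obtain b u where y: "y = GAb b u"
    by (auto elim: geq.cases)
  from GAb.prems(2) y obtain c v where z: "z = GAb c v"
    by (auto elim: geq.cases)
  show ?case
    unfolding z
  proof (rule geq_GAb_trans)
    show "geq t y' \<Longrightarrow> geq y' z' \<Longrightarrow> geq t z'" for y' z'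
      by (rule GAb.IH)
  qed (use GAb.prems y z in simp_all)
qed auto

inductive_simps has_ty_Var [simp]: "has_ty S G (Var x) \<tau>"
inductive_simps has_ty_Bnd [simp]: "has_ty S G (Bnd i) \<tau>"
inductive_simps has_ty_Nm [simp]: "has_ty S G (Nm a) \<tau>"
inductive_simps has_ty_Con [simp]: "has_ty S G (Con c) \<tau>"
inductive_simps has_ty_Fn [simp]: "has_ty S G (Fn f ts) \<tau>"
inductive_simps has_ty_Swap [simp]: "has_ty S G (Swap a b t) \<tau>"
inductive_simps has_ty_Ab [simp]: "has_ty S G (Ab a t) \<tau>"

lemma has_ty_mono: "has_ty S G t \<tau> \<Longrightarrow> set G \<subseteq> set G' \<Longrightarrow> has_ty S G' t \<tau>"
proof (induction t arbitrary: \<tau>)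
  case (Fn f ts)
  then show ?case by (auto simp: list_all2_conv_all_nth)
qed auto

lemma wf_atom_mono: "wf_atom S G A \<Longrightarrow> set G \<subseteq> set G' \<Longrightarrow> wf_atom S G' A"
  by (cases A) (auto intro: has_ty_mono elim: list_all2_mono)

lemma has_ty_unique: "ctx_ok G \<Longrightarrow> has_ty S G t \<tau> \<Longrightarrow> has_ty S G t \<tau>' \<Longrightarrow> \<tau> = \<tau>'"
proof (induction t arbitrary: \<tau> \<tau>')
  case (Var x)
  then show ?case
    by (auto simp: ctx_ok_def distinct_map dest: inj_onD[of csym "set G" "CVar x \<tau>" "CVar x \<tau>'"])
next
  case (Ab a t)
  then show ?case by (auto simp del: has_ty_Swap)
qed auto

lemma has_ty_topen:
  assumes "ctx_ok G" "has_ty S G t \<tau>" "has_ty S G u \<tau>"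
  shows "has_ty S G (topen k t s) \<sigma> \<Longrightarrow> has_ty S G (topen k u s) \<sigma>"
proof (induction s arbitrary: \<sigma>)
  case (Bnd i)
  then show ?case using has_ty_unique[OF assms(1) _ assms(2)] assms(3) by (cases "i = k") auto
next
  case (Fn f ts)
  then show ?case by (auto simp: list_all2_conv_all_nth)
qed auto

lemma wf_atom_inst:
  assumes "ctx_ok G" "wf_atom S G (Eq t u)" "is_eqfr (inst P t)" "wf_atom S G (inst P t)"
  shows "wf_atom S G (inst P u)"
proof -
  from assms(2) obtain \<tau> where "has_ty S G t \<tau>" "has_ty S G u \<tau>" by auto
  note has_ty_topen[OF assms(1) this]
  with assms(3,4) show ?thesis by (cases P) auto
qed

section \<open>Evaluation in the Herbrand model\<close>

lemma gty_NameTE: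
  assumes "gty S x (NameT \<nu>)"
  obtains p where "x = GNm p" "fst p = \<nu>"
  using assms by (cases rule: gty.cases) auto

lemma gty_AbsTE:
  assumes "gty S x (AbsT \<nu> \<sigma>)"
  obtains p y where "x = GAb p y" "fst p = \<nu>" "gty S y \<sigma>"
  using assms by (cases rule: gty.cases) auto

lemma gty_gswap: "gty S x \<tau> \<Longrightarrow> fst p = fst q \<Longrightarrow> gty S (gswap p q x) \<tau>"
proof (induction rule: gty.induct)
  case (1 a)
  then show ?case using gty.intros(1)[of S "nswap p q a"] by (simp add: fst_nswap)
next
  case (3 gs f)
  then show ?case by (auto intro!: gty.intros simp: list_all2_map1 elim: list_all2_mono)
next
  case (4 x \<tau> a)
  then show ?case using gty.intros(4)[of S "gswap p q x" \<tau> "nswap p q a"] by (simp add: fst_nswap)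
qed (auto intro: gty.intros)

text \<open>Swapping or abstracting by a value that is not a name does nothing; this is the
  junk convention built into \<open>ev\<close>.\<close>

fun gswap_by :: "('c, 'f, 'n) gtm \<Rightarrow> ('c, 'f, 'n) gtm \<Rightarrow> ('c, 'f, 'n) gtm \<Rightarrow> ('c, 'f, 'n) gtm" where
  "gswap_by (GNm p) (GNm q) x = gswap p q x"
| "gswap_by _ _ x = x"

fun gab_by :: "('c, 'f, 'n) gtm \<Rightarrow> ('c, 'f, 'n) gtm \<Rightarrow> ('c, 'f, 'n) gtm" where
  "gab_by (GNm p) x = GAb p x"
| "gab_by _ x = x"

lemma ev_Swap [simp]: "ev \<theta> (Swap a b t) = gswap_by (ev \<theta> a) (ev \<theta> b) (ev \<theta> t)"
  by (cases "ev \<theta> a"; cases "ev \<theta> b") auto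

lemma ev_Ab [simp]: "ev \<theta> (Ab a t) = gab_by (ev \<theta> a) (ev \<theta> t)"
  by (cases "ev \<theta> a") auto

declare ev.simps(6,7) [simp del]

lemma gswap_by_non_names: "\<not> (\<exists>p q. x = GNm p \<and> y = GNm q) \<Longrightarrow> gswap_by x y z = z"
  by (cases x; cases y) auto

lemma gab_by_non_name: "\<not> (\<exists>p. x = GNm p) \<Longrightarrow> gab_by x y = y"
  by (cases x) auto

lemma gswap_by_geq:
  assumes "geq x x'" "geq y y'" "geq z z'"
  shows "geq (gswap_by x y z) (gswap_by x' y' z')"
proof (cases "\<exists>p q. x = GNm p \<and> y = GNm q")
  case True
  then show ?thesis using assms by (auto simp: geq_gswap)
next
  case False
  moreover have "\<not> (\<exists>p q. x' = GNm p \<and> y' = GNm q)" using False assms by auto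
  ultimately show ?thesis using assms(3) by (simp add: gswap_by_non_names)
qed

lemma gab_by_geq:
  assumes "geq x x'" "geq y y'"
  shows "geq (gab_by x y) (gab_by x' y')"
proof (cases "\<exists>p. x = GNm p")
  case True
  then show ?thesis using assms by (auto intro: geq.intros)
next
  case False
  moreover have "\<not> (\<exists>p. x' = GNm p)" using False assms by auto
  ultimately show ?thesis using assms(2) by (simp add: gab_by_non_name)
qed

lemma gswap_by_gswap: "gswap_by (gswap a c x) (gswap a c y) (gswap a c z) = gswap a c (gswap_by x y z)"
  by (cases x; cases y) (auto simp: gswap_gswap_conj[of a c])

lemma gab_by_gswap: "gab_by (gswap a c x) (gswap a c y) = gswap a c (gab_by x y)"
  by (cases x) auto

lemma gfresh_gswap_by:
  assumes "gfresh a x" "gfresh a y" "gfresh a z"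
  shows "gfresh a (gswap_by x y z)"
proof (cases "\<exists>p q. x = GNm p \<and> y = GNm q")
  case True
  then obtain p q where "x = GNm p" "y = GNm q" by blast
  with assms show ?thesis using gfresh_gswap_iff[of p q a z] by simp
qed (simp add: gswap_by_non_names assms)

lemma gfresh_gab_by: "gfresh a x \<Longrightarrow> gfresh a y \<Longrightarrow> gfresh a (gab_by x y)"
  by (cases x) auto

lemma ev_gty: "has_ty S G t \<tau> \<Longrightarrow> interp_ok S G \<theta> \<Longrightarrow> gty S (ev \<theta> t) \<tau>"
proof (induction rule: has_ty.induct)
  case (ty_var x \<tau> G)
  then show ?case by (auto simp: interp_ok_def)
next
  case (ty_fn G ts f)
  then show ?case by (auto intro!: gty.intros simp: list_all2_map1 elim: list_all2_mono)
next
  case (ty_swap G a \<nu> b t \<tau>)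
  then show ?case by (auto elim!: gty_NameTE intro!: gty_gswap)
next
  case (ty_abs G a \<nu> t \<tau>)
  then show ?case by (auto elim!: gty_NameTE) (metis fst_conv gty.intros(4))
qed (auto intro: gty.intros)

lemma ev_NameT: "has_ty S G a (NameT \<nu>) \<Longrightarrow> interp_ok S G \<theta> \<Longrightarrow> \<exists>p. ev \<theta> a = GNm p \<and> fst p = \<nu>"
  using ev_gty gty_NameTE by metis

lemma ev_topen_geq: "geq (ev \<theta> t) (ev \<theta> u) \<Longrightarrow> geq (ev \<theta> (topen k t s)) (ev \<theta> (topen k u s))"
proof (induction s)
  case (Fn f ts)
  then show ?case by (auto intro!: geq.intros simp: list_all2_conv_all_nth)
qed (auto simp: gswap_by_geq gab_by_geq)

lemma ev_cong:
  "has_ty S G t \<tau> \<Longrightarrow> (\<And>x \<tau>. CVar x \<tau> \<in> set G \<Longrightarrow> \<theta> x = \<theta>' x) \<Longrightarrow> ev \<theta> t = ev \<theta>' t"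
proof (induction rule: has_ty.induct)
  case (ty_fn G ts f)
  then show ?case by (auto simp: list_all2_conv_all_nth in_set_conv_nth)
qed auto

lemma ev_gswap:
  "has_ty S G t \<tau> \<Longrightarrow> CNm a \<notin> set G \<Longrightarrow> CNm c \<notin> set G
    \<Longrightarrow> ev (\<lambda>x. gswap a c (\<theta> x)) t = gswap a c (ev \<theta> t)"
proof (induction rule: has_ty.induct)
  case (ty_nm b G)
  then have "b \<noteq> a" "b \<noteq> c" by auto
  then show ?case by simp
next
  case (ty_fn G ts f)
  then show ?case by (auto simp: list_all2_conv_all_nth in_set_conv_nth)
qed (auto simp: gswap_by_gswap gab_by_gswap)

lemma gfresh_ev:
  "has_ty S G t \<tau> \<Longrightarrow> (\<And>x \<tau>. CVar x \<tau> \<in> set G \<Longrightarrow> gfresh a (\<theta> x))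
    \<Longrightarrow> CNm a \<notin> set G \<Longrightarrow> gfresh a (ev \<theta> t)"
proof (induction rule: has_ty.induct)
  case (ty_fn G ts f)
  then show ?case by (auto simp: list_all2_conv_all_nth in_set_conv_nth)
qed (auto simp: gfresh_gswap_by gfresh_gab_by)

lemma is_eqfr_if_sat_eqfr: "sat_eqfr \<theta> A \<Longrightarrow> is_eqfr A"
  by (cases A) auto

lemma sat_eqfr_inst_geq:
  assumes "sat_eqfr \<theta> (Eq t u)" "sat_eqfr \<theta> (inst P t)"
  shows "sat_eqfr \<theta> (inst P u)"
proof -
  have tu: "geq (ev \<theta> (topen 0 t s)) (ev \<theta> (topen 0 u s))" for s
    using ev_topen_geq assms(1) by simp
  show ?thesis
  proof (cases P)
    case (Eq s1 s2)
    then show ?thesis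
      using assms(2) geq_trans[OF geq_trans[OF geq_sym[OF tu] _] tu] by simp
  next
    case (Fr s1 s2)
    then show ?thesis
      using assms(2) tu[of s1] gfresh_geq[OF tu[of s2]] by (auto split: gtm.splits)
  qed (use assms(2) in auto)
qed

lemma sat_eqfr_cong:
  "wf_atom S G A \<Longrightarrow> (\<And>x \<tau>. CVar x \<tau> \<in> set G \<Longrightarrow> \<theta> x = \<theta>' x) \<Longrightarrow> sat_eqfr \<theta> A = sat_eqfr \<theta>' A"
  by (cases A) (auto simp: ev_cong[of S G _ _ \<theta> \<theta>'] split: gtm.split)

lemma sat_eqfr_gswap:
  assumes "wf_atom S G A" "CNm a \<notin> set G" "CNm c \<notin> set G" "sat_eqfr \<theta> A"
  shows "sat_eqfr (\<lambda>x. gswap a c (\<theta> x)) A"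
proof (cases A)
  case (Eq t u)
  with assms show ?thesis by (auto simp: ev_gswap[OF _ assms(2,3)] geq_gswap)
next
  case (Fr t u)
  with assms obtain p where "ev \<theta> t = GNm p" "gfresh p (ev \<theta> u)"
    by (auto split: gtm.splits)
  with Fr assms show ?thesis
    using gfresh_gswap_iff[of a c p "ev \<theta> u"] by (auto simp: ev_gswap[OF _ assms(2,3)])
qed (use assms in auto)

section \<open>Contexts and admissible interpretations\<close>

lemma not_var_in_CVar: "\<not> var_in x G \<Longrightarrow> CVar x \<tau> \<notin> set G"
  by (force simp: var_in_def)

lemma not_nm_in_CNm: "\<not> nm_in a G \<Longrightarrow> CNm a \<notin> set G"
  by (force simp: nm_in_def)

lemma ctx_ok_append_CNm: "ctx_ok (G @ [CNm a]) \<longleftrightarrow> ctx_ok G \<and> \<not> nm_in a G"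
  by (auto simp: ctx_ok_def nm_in_def)

lemma ctx_ok_append_CVar: "ctx_ok (G @ [CVar x \<tau>]) \<longleftrightarrow> ctx_ok G \<and> \<not> var_in x G"
  by (auto simp: ctx_ok_def var_in_def)

lemma ctx_fresh_iff:
  "(a, t) \<in> ctx_fresh S G \<longleftrightarrow> (\<exists>G1 G2 \<tau>. G = G1 @ [CNm a] @ G2 \<and> has_ty S G1 t \<tau>)"
  by (simp add: ctx_fresh.simps)

lemma ctx_fresh_append:
  "(a, t) \<in> ctx_fresh S (G @ [e]) \<longleftrightarrow>
    (a, t) \<in> ctx_fresh S G \<or> (e = CNm a \<and> (\<exists>\<tau>. has_ty S G t \<tau>))"
proof
  assume "(a, t) \<in> ctx_fresh S (G @ [e])"
  then obtain G1 G2 \<tau> where "G @ [e] = G1 @ [CNm a] @ G2" "has_ty S G1 t \<tau>"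
    by (auto simp: ctx_fresh_iff)
  then show "(a, t) \<in> ctx_fresh S G \<or> (e = CNm a \<and> (\<exists>\<tau>. has_ty S G t \<tau>))"
    by (cases G2 rule: rev_cases) (auto simp: ctx_fresh_iff)
next
  assume "(a, t) \<in> ctx_fresh S G \<or> (e = CNm a \<and> (\<exists>\<tau>. has_ty S G t \<tau>))"
  then show "(a, t) \<in> ctx_fresh S (G @ [e])"
  proof
    assume "(a, t) \<in> ctx_fresh S G"
    then obtain G1 G2 \<tau> where "G = G1 @ [CNm a] @ G2" "has_ty S G1 t \<tau>"
      by (auto simp: ctx_fresh_iff)
    then show ?thesis unfolding ctx_fresh_iff by (metis append.assoc)
  next
    assume "e = CNm a \<and> (\<exists>\<tau>. has_ty S G t \<tau>)"
    then show ?thesis unfolding ctx_fresh_iff by (metis append_Nil2)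
  qed
qed

lemma ctx_fresh_typed: "(a, t) \<in> ctx_fresh S G \<Longrightarrow> CNm a \<in> set G \<and> (\<exists>\<tau>. has_ty S G t \<tau>)"
  by (fastforce simp: ctx_fresh_iff intro: has_ty_mono)

text \<open>A name introduced by \<open>#a\<close> does not occur in the context before it, so it is fresh
  for every value of a term typed there.\<close>

lemma gfresh_ev_ctx_fresh:
  assumes "(a, t) \<in> ctx_fresh S G" "ctx_ok G" "interp_ok S G \<theta>"
  shows "gfresh a (ev \<theta> t)"
proof -
  from assms(1) obtain G1 G2 \<tau> where G: "G = G1 @ [CNm a] @ G2" and t: "has_ty S G1 t \<tau>"
    by (auto simp: ctx_fresh_iff)
  have "gfresh a (\<theta> x)" if "CVar x \<sigma> \<in> set G1" for x \<sigma>
  proof -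
    have "(a, Var x) \<in> ctx_fresh S G"
      using that G by (auto simp: ctx_fresh_iff)
    then show ?thesis using assms(3) unfolding interp_ok_def by blast
  qed
  moreover have "CNm a \<notin> set G1"
    using assms(2) G by (force simp: ctx_ok_def)
  ultimately show ?thesis using gfresh_ev[OF t] by blast
qed

lemma interp_ok_cong:
  assumes "interp_ok S G \<theta>" "\<And>x \<tau>. CVar x \<tau> \<in> set G \<Longrightarrow> \<theta>' x = \<theta> x"
  shows "interp_ok S G \<theta>'"
  unfolding interp_ok_def
proof (intro conjI allI impI)
  show "gty S (\<theta>' x) \<tau>" if "CVar x \<tau> \<in> set G" for x \<tau>
    using that assms unfolding interp_ok_def by metis
  show "gfresh b (\<theta>' x)" if b: "(b, Var x) \<in> ctx_fresh S G" for b x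
  proof -
    obtain \<tau> where "CVar x \<tau> \<in> set G" using ctx_fresh_typed[OF b] by auto
    then show ?thesis using b assms unfolding interp_ok_def by metis
  qed
qed

lemma interp_ok_append_CVar:
  "interp_ok S (G @ [CVar x \<tau>]) \<theta> \<longleftrightarrow> interp_ok S G \<theta> \<and> gty S (\<theta> x) \<tau>"
  unfolding interp_ok_def ctx_fresh_append by auto

lemma interp_ok_append_CNm:
  "interp_ok S (G @ [CNm a]) \<theta> \<longleftrightarrow>
    interp_ok S G \<theta> \<and> (\<forall>x \<tau>. CVar x \<tau> \<in> set G \<longrightarrow> gfresh a (\<theta> x))"
  unfolding interp_ok_def ctx_fresh_append has_ty_Var by (simp del: split_paired_All) blast

lemma interp_ok_gswap:
  assumes "interp_ok S G \<theta>" "fst a = fst c" "CNm a \<notin> set G" "CNm c \<notin> set G"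
  shows "interp_ok S G (\<lambda>x. gswap a c (\<theta> x))"
  unfolding interp_ok_def
proof (intro conjI allI impI)
  show "gty S (gswap a c (\<theta> x)) \<tau>" if "CVar x \<tau> \<in> set G" for x \<tau>
    using that assms(1,2) by (auto simp: interp_ok_def intro: gty_gswap)
  show "gfresh b (gswap a c (\<theta> x))" if "(b, Var x) \<in> ctx_fresh S G" for b x
  proof -
    have "b \<noteq> a" "b \<noteq> c" using that assms(3,4) ctx_fresh_typed by blast+
    moreover have "gfresh b (\<theta> x)" using that assms(1) unfolding interp_ok_def by blast
    ultimately show ?thesis using gfresh_gswap_iff[of a c b "\<theta> x"] by simp
  qed
qed

lemma obtain_fresh_nsym:
  assumes "finite (N :: 'n nsym set)"
  obtains c where "fst c = \<nu>" "c \<notin> N"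
proof -
  obtain k where "k \<notin> snd ` N"
    using ex_new_if_finite[OF infinite_UNIV_nat] assms by blast
  then show thesis using that[of "(\<nu>, k)"] by force
qed

text \<open>Rule (F): rename \<open>a\<close> to a name \<open>c\<close> occurring nowhere in the context or its values;
  afterwards \<open>a\<close> is fresh for every value.\<close>

lemma interp_ok_extend_name:
  assumes "\<not> nm_in a G" "interp_ok S G \<theta>"
  obtains \<theta>' where "interp_ok S (G @ [CNm a]) \<theta>'"
    "\<And>A. wf_atom S G A \<Longrightarrow> sat_eqfr \<theta> A \<Longrightarrow> sat_eqfr \<theta>' A"
proof -
  define N where "N = (\<Union>e \<in> set G. case e of CVar x \<tau> \<Rightarrow> gnames (\<theta> x) | CNm b \<Rightarrow> {b})"
  have "finite N"
    unfolding N_def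
  proof (rule finite_UN_I)
    show "finite (case e of CVar x \<tau> \<Rightarrow> gnames (\<theta> x) | CNm b \<Rightarrow> {b})" for e
      by (cases e) simp_all
  qed simp
  then obtain c where c: "fst c = fst a" "c \<notin> N"
    by (rule obtain_fresh_nsym)
  have a: "CNm a \<notin> set G"
    using assms(1) by (rule not_nm_in_CNm)
  have c_ctx: "CNm c \<notin> set G"
  proof
    assume "CNm c \<in> set G"
    then have "c \<in> N" unfolding N_def by (intro UN_I[of "CNm c"]) simp_all
    with c(2) show False ..
  qed
  have c_vals: "gfresh c (\<theta> x)" if "CVar x \<tau> \<in> set G" for x \<tau>
  proof (rule gfresh_if_notin_gnames)
    have "gnames (\<theta> x) \<subseteq> N"
      unfolding N_def using UN_upper[OF that, of "case_centry (\<lambda>x \<tau>. gnames (\<theta> x)) (\<lambda>b. {b})"]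
      by simp
    with c(2) show "c \<notin> gnames (\<theta> x)" by blast
  qed
  have "interp_ok S (G @ [CNm a]) (\<lambda>x. gswap a c (\<theta> x))"
    unfolding interp_ok_append_CNm
  proof (intro conjI allI impI)
    show "interp_ok S G (\<lambda>x. gswap a c (\<theta> x))"
      using interp_ok_gswap[OF assms(2) c(1)[symmetric] a c_ctx] .
    show "gfresh a (gswap a c (\<theta> x))" if "CVar x \<tau> \<in> set G" for x \<tau>
      using c_vals[OF that] gfresh_gswap_iff[of a c c "\<theta> x"] by simp
  qed
  then show thesis by (rule that[OF _ sat_eqfr_gswap[OF _ a c_ctx]])
qed

text \<open>Rule (A3): a value of abstraction type is an abstraction \<open>\<langle>n\<rangle>g\<close>; interpret the new
  variables by \<open>n\<close> and \<open>g\<close>.\<close>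

lemma interp_ok_extend_abs:
  assumes t: "has_ty S G t (AbsT \<nu> \<sigma>)" and "\<not> var_in a G" "\<not> var_in x G" "a \<noteq> x"
    and "interp_ok S G \<theta>"
  obtains \<theta>' where "interp_ok S (G @ [CVar a (NameT \<nu>), CVar x \<sigma>]) \<theta>'"
    "sat_eqfr \<theta>' (Eq t (Ab (Var a) (Var x)))"
    "\<And>y \<tau>. CVar y \<tau> \<in> set G \<Longrightarrow> \<theta>' y = \<theta> y"
proof -
  obtain n g where ng: "ev \<theta> t = GAb n g" "fst n = \<nu>" "gty S g \<sigma>"
    using ev_gty[OF t assms(5)] by (rule gty_AbsTE)
  define \<theta>' where "\<theta>' = \<theta>(a := GNm n, x := g)"
  have agree: "\<theta>' y = \<theta> y" if "CVar y \<tau> \<in> set G" for y \<tau>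
  proof -
    have "y \<noteq> a" "y \<noteq> x"
      using that not_var_in_CVar[OF assms(2)] not_var_in_CVar[OF assms(3)] by blast+
    then show ?thesis unfolding \<theta>'_def by simp
  qed
  have "interp_ok S G \<theta>'"
    using assms(5) agree by (rule interp_ok_cong)
  moreover have "gty S (\<theta>' a) (NameT \<nu>)"
    unfolding \<theta>'_def using assms(4) ng(2) gty.intros(1)[of S n] by simp
  moreover have "gty S (\<theta>' x) \<sigma>"
    unfolding \<theta>'_def using ng(3) by simp
  ultimately have ok: "interp_ok S (G @ [CVar a (NameT \<nu>), CVar x \<sigma>]) \<theta>'"
    using interp_ok_append_CVar[of S "G @ [CVar a (NameT \<nu>)]" x \<sigma> \<theta>']
      interp_ok_append_CVar[of S G a "NameT \<nu>" \<theta>'] by simp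
  have "ev \<theta>' t = GAb n g"
    using ev_cong[OF t agree] ng(1) by simp
  then have sat: "sat_eqfr \<theta>' (Eq t (Ab (Var a) (Var x)))"
    unfolding \<theta>'_def using assms(4) by simp
  show thesis by (rule that[OF ok sat agree])
qed

section \<open>Soundness\<close>

lemma ax_inst_sound:
  assumes "ax_inst S G Ps Qs" "interp_ok S G \<theta>" "\<forall>P \<in> set Ps. sat_eqfr \<theta> P"
  shows "\<exists>Q \<in> set Qs. wf_atom S G Q \<and> sat_eqfr \<theta> Q"
proof -
  have name: "\<exists>p. ev \<theta> a = GNm p \<and> fst p = \<nu>" if "has_ty S G a (NameT \<nu>)" for a \<nu>
    using ev_NameT[OF that assms(2)] .
  from assms(1,3) show ?thesis
  proof (induction rule: ax_inst.induct)
    case (S1 a \<nu> t \<tau>)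
    obtain p where "ev \<theta> a = GNm p" using name[OF S1(1)] by blast
    with S1 show ?case by auto
  next
    case (S2 a \<nu> b t \<tau>)
    obtain p q where "ev \<theta> a = GNm p" "ev \<theta> b = GNm q"
      using name[OF S2(1)] name[OF S2(2)] by blast
    with S2 show ?case by auto
  next
    case (S3 a \<nu> b)
    obtain p q where "ev \<theta> a = GNm p" "ev \<theta> b = GNm q"
      using name[OF S3(1)] name[OF S3(2)] by blast
    with S3 show ?case by auto
  next
    case (E1 a \<nu> b c)
    obtain p q where "ev \<theta> a = GNm p" "ev \<theta> b = GNm q"
      using name[OF E1(1)] name[OF E1(2)] by blast
    with E1 show ?case by auto
  next
    case (E2_fn a \<nu> b f ts \<tau>)
    obtain p q where "ev \<theta> a = GNm p" "ev \<theta> b = GNm q"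
      using name[OF E2_fn(1)] name[OF E2_fn(2)] by blast
    with E2_fn show ?case by (auto simp: list_all2_map1 comp_def elim: list_all2_mono)
  next
    case (E2_swap a \<nu> b c d t \<tau>)
    then obtain \<nu>' where c: "has_ty S G c (NameT \<nu>')" and d: "has_ty S G d (NameT \<nu>')" by auto
    obtain p q r r' where "ev \<theta> a = GNm p" "ev \<theta> b = GNm q" "ev \<theta> c = GNm r" "ev \<theta> d = GNm r'"
      using name[OF E2_swap(1)] name[OF E2_swap(2)]
        name[OF c] name[OF d] by blast
    with E2_swap c d show ?case by (auto simp: gswap_gswap_conj[of p q r r'])
  next
    case (E2_abs a \<nu> b c t \<tau>)
    then obtain \<nu>' where c: "has_ty S G c (NameT \<nu>')" by auto
    obtain p q r where "ev \<theta> a = GNm p" "ev \<theta> b = GNm q" "ev \<theta> c = GNm r"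
      using name[OF E2_abs(1)] name[OF E2_abs(2)]
        name[OF c] by blast
    with E2_abs c show ?case by auto
  next
    case (E3_eq a \<nu> b t u)
    obtain p q where "ev \<theta> a = GNm p" "ev \<theta> b = GNm q"
      using name[OF E3_eq(1)] name[OF E3_eq(2)] by blast
    with E3_eq show ?case by (auto simp: geq_gswap)
  next
    case (E3_fr a \<nu> b c t)
    then obtain \<nu>' where c: "has_ty S G c (NameT \<nu>')" by auto
    obtain p q r where "ev \<theta> a = GNm p" "ev \<theta> b = GNm q" "ev \<theta> c = GNm r"
      using name[OF E3_fr(1)] name[OF E3_fr(2)]
        name[OF c] by blast
    with E3_fr c show ?case using gfresh_gswap_iff[of p q r] by auto
  next
    case (F1 a \<nu> b t \<tau>)
    obtain p q where "ev \<theta> a = GNm p" "ev \<theta> b = GNm q"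
      using name[OF F1(1)] name[OF F1(2)] by blast
    with F1 show ?case by (auto simp: geq_gswap_fresh)
  next
    case (F2 a \<nu> b \<nu>')
    obtain p q where "ev \<theta> a = GNm p" "fst p = \<nu>" "ev \<theta> b = GNm q" "fst q = \<nu>'"
      using name[OF F2(1)] name[OF F2(2)] by blast
    with F2 show ?case by auto
  next
    case (F3 a \<nu>)
    obtain p where "ev \<theta> a = GNm p" using name[OF F3(1)] by blast
    with F3 show ?case by auto
  next
    case (F4 a \<nu> b)
    obtain p q where "ev \<theta> a = GNm p" "ev \<theta> b = GNm q"
      using name[OF F4(1)] name[OF F4(2)] by blast
    with F4 show ?case by auto
  next
    case (A1 a \<nu> b t \<tau> u)
    obtain p q where "ev \<theta> a = GNm p" "ev \<theta> b = GNm q"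
      using name[OF A1(1)] name[OF A1(2)] by blast
    with A1 show ?case by (cases "p = q") (auto intro: geq.intros)
  qed simp
qed

definition wf_satisfiable :: "('c, 'f, 'p, 'd, 'n) sig \<Rightarrow> ('d, 'n) ctx \<Rightarrow> ('c, 'f, 'p, 'd, 'n) fm multiset \<Rightarrow> bool" where
  "wf_satisfiable S G \<Gamma> \<longleftrightarrow> ctx_ok G \<and> (\<forall>A \<in># \<Gamma>. wf_atom S G A) \<and>
     (\<exists>\<theta>. interp_ok S G \<theta> \<and> (\<forall>A \<in># \<Gamma>. sat_eqfr \<theta> A))"

lemma wf_satisfiable_eqR:
  "has_ty S G t \<tau> \<Longrightarrow> wf_satisfiable S G \<Gamma> \<Longrightarrow> wf_satisfiable S G (add_mset (Eq t t) \<Gamma>)"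
  by (auto simp: wf_satisfiable_def)

lemma wf_satisfiable_eqS:
  assumes "wf_satisfiable S G (\<Gamma> + {#Eq t u, inst P t#})"
  shows "wf_satisfiable S G (\<Gamma> + {#Eq t u, inst P t, inst P u#})"
proof -
  from assms obtain \<theta> where ok: "ctx_ok G" "interp_ok S G \<theta>"
    and wf: "\<forall>A \<in># \<Gamma> + {#Eq t u, inst P t#}. wf_atom S G A"
    and sat: "\<forall>A \<in># \<Gamma> + {#Eq t u, inst P t#}. sat_eqfr \<theta> A"
    by (auto simp: wf_satisfiable_def)
  then have tu: "sat_eqfr \<theta> (Eq t u)" and Pt: "sat_eqfr \<theta> (inst P t)" by auto
  have "wf_atom S G (inst P u)"
    using wf_atom_inst[OF ok(1) _ is_eqfr_if_sat_eqfr[OF Pt]] wf by auto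
  moreover have "sat_eqfr \<theta> (inst P u)"
    using sat_eqfr_inst_geq[OF tu Pt] .
  ultimately show ?thesis using ok wf sat by (auto simp: wf_satisfiable_def)
qed

lemma wf_satisfiable_ax:
  assumes "ax_inst S G Ps Qs" "wf_satisfiable S G (\<Gamma> + mset Ps)"
  shows "\<exists>Q \<in> set Qs. wf_satisfiable S G (add_mset Q (\<Gamma> + mset Ps))"
proof -
  from assms(2) obtain \<theta> where ok: "ctx_ok G" "interp_ok S G \<theta>"
    and wf: "\<forall>A \<in># \<Gamma> + mset Ps. wf_atom S G A" and sat: "\<forall>A \<in># \<Gamma> + mset Ps. sat_eqfr \<theta> A"
    by (auto simp: wf_satisfiable_def)
  then obtain Q where "Q \<in> set Qs" "wf_atom S G Q" "sat_eqfr \<theta> Q"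
    using ax_inst_sound[OF assms(1) ok(2)] by auto
  with ok wf sat show ?thesis by (auto simp: wf_satisfiable_def)
qed

lemma wf_satisfiable_A2:
  assumes "wf_satisfiable S G (add_mset (Eq (Ab a t) (Ab b u)) \<Gamma>)"
  shows "wf_satisfiable S G (\<Gamma> + {#Eq (Ab a t) (Ab b u), Eq a b, Eq t u#}) \<or>
    wf_satisfiable S G (\<Gamma> + {#Eq (Ab a t) (Ab b u), Fr a u, Eq t (Swap a b u)#})"
proof -
  from assms obtain \<theta> where ok: "ctx_ok G" "interp_ok S G \<theta>"
    and wf: "\<forall>A \<in># add_mset (Eq (Ab a t) (Ab b u)) \<Gamma>. wf_atom S G A"
    and sat: "\<forall>A \<in># add_mset (Eq (Ab a t) (Ab b u)) \<Gamma>. sat_eqfr \<theta> A"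
    by (auto simp: wf_satisfiable_def)
  from wf obtain \<nu> \<sigma> where ty: "has_ty S G a (NameT \<nu>)" "has_ty S G b (NameT \<nu>)"
      "has_ty S G t \<sigma>" "has_ty S G u \<sigma>"
    by auto
  obtain p q where pq: "ev \<theta> a = GNm p" "ev \<theta> b = GNm q"
    using ev_NameT[OF ty(1) ok(2)] ev_NameT[OF ty(2) ok(2)] by blast
  with sat have "geq (GAb p (ev \<theta> t)) (GAb q (ev \<theta> u))" by simp
  then show ?thesis
  proof (cases rule: geq_GAbE)
    case 1
    then show ?thesis using ok wf sat ty pq by (auto simp: wf_satisfiable_def)
  next
    case 2
    then show ?thesis using ok wf sat ty pq by (auto simp: wf_satisfiable_def)
  qed
qed

lemma wf_satisfiable_A3:
  assumes "has_ty S G t (AbsT \<nu> \<sigma>)" "\<not> var_in a G" "\<not> var_in x G" "a \<noteq> x"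
    and "wf_satisfiable S G \<Gamma>"
  shows "wf_satisfiable S (G @ [CVar a (NameT \<nu>), CVar x \<sigma>]) (add_mset (Eq t (Ab (Var a) (Var x))) \<Gamma>)"
proof -
  let ?G' = "G @ [CVar a (NameT \<nu>), CVar x \<sigma>]"
  from assms(5) obtain \<theta> where ok: "ctx_ok G" "interp_ok S G \<theta>"
    and wf: "\<forall>A \<in># \<Gamma>. wf_atom S G A" and sat: "\<forall>A \<in># \<Gamma>. sat_eqfr \<theta> A"
    by (auto simp: wf_satisfiable_def)
  obtain \<theta>' where "interp_ok S ?G' \<theta>'" "sat_eqfr \<theta>' (Eq t (Ab (Var a) (Var x)))"
    and agree: "\<And>y \<tau>. CVar y \<tau> \<in> set G \<Longrightarrow> \<theta>' y = \<theta> y"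
    using interp_ok_extend_abs[OF assms(1-4) ok(2)] by blast
  moreover have "ctx_ok ?G'"
    using ok(1) assms(2-4) ctx_ok_append_CVar[of "G @ [CVar a (NameT \<nu>)]"]
    by (simp add: ctx_ok_append_CVar var_in_def)
  moreover have "\<forall>A \<in># add_mset (Eq t (Ab (Var a) (Var x))) \<Gamma>. wf_atom S ?G' A"
    using wf has_ty_mono[OF assms(1), of ?G']
    by (auto intro: wf_atom_mono intro!: exI[of _ "AbsT \<nu> \<sigma>"])
  moreover have "\<forall>A \<in># \<Gamma>. sat_eqfr \<theta>' A"
    using sat wf sat_eqfr_cong[of S G _ \<theta>' \<theta>, OF _ agree] by auto
  ultimately show ?thesis by (auto simp: wf_satisfiable_def)
qed

lemma wf_satisfiable_Fresh:
  assumes "\<not> nm_in a G" "wf_satisfiable S G \<Gamma>"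
  shows "wf_satisfiable S (G @ [CNm a]) \<Gamma>"
proof -
  from assms(2) obtain \<theta> where ok: "ctx_ok G" "interp_ok S G \<theta>"
    and wf: "\<forall>A \<in># \<Gamma>. wf_atom S G A" and sat: "\<forall>A \<in># \<Gamma>. sat_eqfr \<theta> A"
    by (auto simp: wf_satisfiable_def)
  obtain \<theta>' where "interp_ok S (G @ [CNm a]) \<theta>'"
    and "\<And>A. wf_atom S G A \<Longrightarrow> sat_eqfr \<theta> A \<Longrightarrow> sat_eqfr \<theta>' A"
    using interp_ok_extend_name[OF assms(1) ok(2)] by blast
  moreover have "ctx_ok (G @ [CNm a])"
    using ok(1) assms(1) by (simp add: ctx_ok_append_CNm)
  moreover have "\<forall>A \<in># \<Gamma>. wf_atom S (G @ [CNm a]) A"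
    using wf by (auto intro: wf_atom_mono)
  ultimately show ?thesis using wf sat by (auto simp: wf_satisfiable_def)
qed

lemma wf_satisfiable_CtxFr:
  assumes "(a, t) \<in> ctx_fresh S G" "wf_satisfiable S G \<Gamma>"
  shows "wf_satisfiable S G (add_mset (Fr (Nm a) t) \<Gamma>)"
  using assms ctx_fresh_typed[OF assms(1)] gfresh_ev_ctx_fresh[OF assms(1)]
  by (auto simp: wf_satisfiable_def)

lemma deriv_Bot_not_wf_satisfiable:
  "deriv S G \<Gamma> \<Delta> \<Longrightarrow> \<Delta> = {#Bot#} \<Longrightarrow> \<not> wf_satisfiable S G \<Gamma>"
proof (induction rule: deriv.induct)
  case (eqR G t \<tau> \<Gamma> \<Delta>)
  then show ?case using wf_satisfiable_eqR[OF eqR.hyps(1)] by blast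
next
  case (eqS P G \<Gamma> t u \<Delta>)
  then show ?case using wf_satisfiable_eqS[of S G \<Gamma> t u P] by blast
next
  case (ax G Ps Qs \<Gamma> \<Delta>)
  then show ?case using wf_satisfiable_ax[OF ax.hyps(1), of \<Gamma>] by blast
next
  case (A2 G \<Gamma> a t b u \<Delta>)
  then show ?case using wf_satisfiable_A2[of S G a t b u \<Gamma>] by blast
next
  case (A3 G t \<nu> \<sigma> a x \<Gamma> \<Delta>)
  then show ?case using wf_satisfiable_A3[OF A3.hyps(1-4), of \<Gamma>] by blast
next
  case (Fresh a G \<Gamma> \<Delta>)
  then show ?case using wf_satisfiable_Fresh[OF Fresh.hyps(1), of S \<Gamma>] by blast
next
  case (CtxFr a t G \<Gamma> \<Delta>)
  then show ?case using wf_satisfiable_CtxFr[OF CtxFr.hyps(1), of \<Gamma>] by blast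
qed (auto simp: wf_satisfiable_def)

theorem mainTheorem8:
  fixes S :: "('c, 'f, 'p, 'd, 'n) sig"
    and G :: "('d, 'n) ctx"
    and \<Gamma> :: "('c, 'f, 'p, 'd, 'n) fm multiset"
  assumes "ctx_ok G"
    and "\<forall>A \<in># \<Gamma>. is_eqfr A \<and> wf_atom S G A"
    and "deriv S G \<Gamma> {#Bot#}"
  shows "\<not> (\<exists>\<theta>. interp_ok S G \<theta> \<and> (\<forall>A \<in># \<Gamma>. sat_eqfr \<theta> A))"
  using deriv_Bot_not_wf_satisfiable[OF assms(3) refl] assms(1,2)
  by (auto simp: wf_satisfiable_def)

end
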